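(* Let $\pi=\gamma/Z$ be a probability density on $\mathbb{R}^d$ with $\gamma\ge 0$ and $Z=\int\gamma$, let $\sigma>0$ and $K\ge1$. Let $p^{\mathrm{ref}}(y_{0:K})=p^{\mathrm{ref}}_0(y_0)\prod_{k=0}^{K-1}p^{\mathrm{ref}}_{k+1|k}(y_{k+1}|y_k)$ be a Markov chain density on $(\mathbb{R}^d)^{K+1}$ (a discretisation of the reference process) with $p^{\mathrm{ref}}_0=\mathcal{N}(0,\sigma^2I)$ and with marginal density of $y_k$ denoted $p^{\mathrm{ref}}_k$, and let $q^\theta(y_{0:K})$ be a probability density on $(\mathbb{R}^d)^{K+1}$ (a discretisation of the proposal process), the law of $y_K$ under $q^\theta$ being denoted $q^\theta_0$. If $p^{\mathrm{ref}}_K(y)=p^{\mathrm{ref}}_0(y)$ for all $y$, then $$\mathrm{KL}(q^\theta\|p^{\mathrm{ref}})+\mathbb{E}_{y_K\sim q^\theta_0}\Big[\ln\Big(\frac{p^{\mathrm{ref}}_0(y_K)}{\pi(y_K)}\Big)\Big]\ge 0,$$ and, for $\hat Z=\dfrac{\gamma(y_K)\,p^{\mathrm{ref}}(y_{0:K})}{\mathcal{N}(y_K;0,\sigma^2I)\,q^\theta(y_{0:K})}$ with $y_{0:K}\sim q^\theta$, one has $\mathbb{E}_{q^\theta}[\log\hat Z]\le\log Z$ (an evidence lower bound). Furthermore, the Euler--Maruyama discretisation of the reference SDE $\mathrm{d}y_t=-\beta_{T-t}y_t\,\mathrm{d}t+\sigma\sqrt{2\beta_{T-t}}\,\mathrm{d}W_t$,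 $y_0\sim\mathcal{N}(0,\sigma^2I)$, with step $\delta=T/K>0$ and positive $\beta$, i.e. $y_{k+1}=y_k-\delta\beta_{T-k\delta}y_k+\sigma\sqrt{2\beta_{T-k\delta}\delta}\,\varepsilon_k$ with $\varepsilon_k\stackrel{\text{i.i.d.}}{\sim}\mathcal{N}(0,I)$, does not satisfy the condition $p^{\mathrm{ref}}_K=p^{\mathrm{ref}}_0$.
   Context: $\mathcal{N}(y;0,\sigma^2I)$ denotes the Gaussian density with mean $0$ and covariance $\sigma^2 I$ at $y$. The reference SDE is the time reversal of the stationary Ornstein--Uhlenbeck process $\mathrm{d}x_t=-\beta_tx_t\,\mathrm{d}t+\sigma\sqrt{2\beta_t}\,\mathrm{d}B_t$ started at $\mathcal{N}(0,\sigma^2I)$, where $t\mapsto\beta_t$ is a non-decreasing positive function on $[0,T]$. *)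

theory Defs
  imports "HOL-Probability.Probability"
begin

definition path_space :: "nat \<Rightarrow> (nat \<Rightarrow> 'a::euclidean_space) measure" where
  "path_space K = PiM {0..K} (\<lambda>_. lborel)"

definition gauss_dens :: "real \<Rightarrow> 'a::euclidean_space \<Rightarrow> 'a \<Rightarrow> real" where
  "gauss_dens v m y = (2 * pi * v) powr (- real DIM('a) / 2) * exp (- (norm (y - m))\<^sup>2 / (2 * v))"

definition prob_density :: "'b measure \<Rightarrow> ('b \<Rightarrow> real) \<Rightarrow> bool" where
  "prob_density M f \<longleftrightarrow> f \<in> borel_measurable M \<and> (\<forall>x\<in>space M. 0 \<le> f x)
      \<and> integrable M f \<and> integral\<^sup>L M f = 1"

definition trans_density :: "('a::euclidean_space \<Rightarrow> 'a \<Rightarrow> real) \<Rightarrow> bool" where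
  "trans_density t \<longleftrightarrow> (\<lambda>(x, y). t x y) \<in> borel_measurable (lborel \<Otimes>\<^sub>M lborel)
      \<and> (\<forall>x. prob_density lborel (t x))"

definition markov_dens :: "('a \<Rightarrow> real) \<Rightarrow> (nat \<Rightarrow> 'a \<Rightarrow> 'a \<Rightarrow> real) \<Rightarrow> nat \<Rightarrow> (nat \<Rightarrow> 'a) \<Rightarrow> real" where
  "markov_dens p0 tr K y = p0 (y 0) * (\<Prod>k<K. tr k (y k) (y (Suc k)))"

definition law_at :: "(nat \<Rightarrow> 'a::euclidean_space) measure \<Rightarrow> ((nat \<Rightarrow> 'a) \<Rightarrow> real) \<Rightarrow> nat \<Rightarrow> 'a measure" where
  "law_at M f k = distr (density M (\<lambda>y. ennreal (f y))) lborel (\<lambda>y. y k)"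

definition KL_dens :: "'b measure \<Rightarrow> ('b \<Rightarrow> real) \<Rightarrow> ('b \<Rightarrow> real) \<Rightarrow> real" where
  "KL_dens M f g = (\<integral>x. f x * ln (f x / g x) \<partial>M)"

text \<open>Euler--Maruyama transition density of the reference SDE with step T/K:
  y_{k+1} ~ N((1 - delta b) y_k, 2 sigma^2 b delta I), b = beta(T - k delta).\<close>
definition em_trans :: "real \<Rightarrow> (real \<Rightarrow> real) \<Rightarrow> real \<Rightarrow> nat \<Rightarrow> nat \<Rightarrow> 'a::euclidean_space \<Rightarrow> 'a \<Rightarrow> real" where
  "em_trans \<sigma> \<beta> T K k x y =
     (let \<delta> = T / real K; b = \<beta> (T - real k * \<delta>)
      in gauss_dens (2 * \<sigma>\<^sup>2 * b * \<delta>) ((1 - \<delta> * b) *\<^sub>R x) y)"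

end

theory Submission
  imports Defs
begin

text \<open>Tilting the reference chain p at the terminal time, G(y) = p(y) \<pi>(y_K) / p0(y_K), gives again
  a probability density on paths, precisely because y_K has law p0 under p. The left-hand side of
  the first inequality is KL(q || G), hence nonnegative by Gibbs' inequality; and since
  ln Zhat = ln Z - ln (q / G), the q-mean of ln Zhat is ln Z - KL(q || G) \<le> ln Z.

  For Gaussian transitions y_{k+1} ~ N(c_k y_k, v_k I) the second moments obey
  m_{k+1} = c_k^2 m_k + d v_k. For Euler--Maruyama, c_k = 1 - \<delta> b_k and v_k = 2 \<sigma>^2 \<delta> b_k, so
  m_{k+1} - d \<sigma>^2 = c_k^2 (m_k - d \<sigma>^2) + d \<sigma>^2 (\<delta> b_k)^2: starting from m_0 = d \<sigma>^2, the
  terminal second moment strictly exceeds d \<sigma>^2, the second moment of N(0, \<sigma>^2 I).\<close>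

section \<open>Markov chain densities on path space\<close>

lemma borel_measurable_markov_dens:
  fixes p0 :: "'a::euclidean_space \<Rightarrow> real"
  assumes p0: "p0 \<in> borel_measurable lborel"
    and tr: "\<And>k. k < n \<Longrightarrow> (\<lambda>(x, y). tr k x y) \<in> borel_measurable (lborel \<Otimes>\<^sub>M lborel)"
    and I: "{0..n} \<subseteq> I"
  shows "markov_dens p0 tr n \<in> borel_measurable (PiM I (\<lambda>_. lborel))"
proof -
  have "(\<lambda>y. p0 (y 0)) \<in> borel_measurable (PiM I (\<lambda>_. lborel))"
    using I p0 by (intro measurable_compose[OF measurable_component_singleton, of 0 I]) auto
  moreover have "(\<lambda>y. tr k (y k) (y (Suc k))) \<in> borel_measurable (PiM I (\<lambda>_. lborel))" if "k < n" for k
  proof -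
    have "(\<lambda>y. (y k, y (Suc k))) \<in> measurable (PiM I (\<lambda>_. lborel)) (lborel \<Otimes>\<^sub>M lborel)"
      using I that by (intro measurable_Pair measurable_component_singleton) auto
    from measurable_compose[OF this tr[OF that]] show ?thesis
      by simp
  qed
  ultimately show ?thesis
    unfolding markov_dens_def by (intro borel_measurable_times borel_measurable_prod) auto
qed

lemma markov_dens_nonneg:
  assumes "\<And>x. 0 \<le> p0 x" and "\<And>k x y. k < n \<Longrightarrow> 0 \<le> tr k x y"
  shows "0 \<le> markov_dens p0 tr n y"
  unfolding markov_dens_def using assms by (intro mult_nonneg_nonneg prod_nonneg) auto

lemma markov_dens_Suc_fun_upd:
  "markov_dens p0 tr (Suc n) (y(Suc n := z)) = markov_dens p0 tr n y * tr n (y n) z"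
proof -
  have "(\<Prod>k<n. tr k ((y(Suc n := z)) k) ((y(Suc n := z)) (Suc k))) = (\<Prod>k<n. tr k (y k) (y (Suc k)))"
    by (intro prod.cong) auto
  then show ?thesis
    unfolding markov_dens_def by (simp add: mult.assoc)
qed

lemma nn_integral_markov_dens_0:
  fixes p0 :: "'a::euclidean_space \<Rightarrow> real" and g :: "'a \<Rightarrow> ennreal"
  assumes "p0 \<in> borel_measurable lborel" and "g \<in> borel_measurable lborel"
  shows "(\<integral>\<^sup>+y. ennreal (markov_dens p0 tr 0 y) * g (y 0) \<partial>path_space 0)
       = (\<integral>\<^sup>+x. ennreal (p0 x) * g x \<partial>lborel)"
proof -
  interpret product_sigma_finite "\<lambda>_::nat. (lborel :: 'a measure)"
    by standard
  show ?thesis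
    using product_nn_integral_singleton[of "\<lambda>x. ennreal (p0 x) * g x" 0] assms
    by (simp add: path_space_def markov_dens_def)
qed

lemma nn_integral_markov_dens_Suc:
  fixes p0 :: "'a::euclidean_space \<Rightarrow> real" and g :: "'a \<Rightarrow> ennreal"
  assumes p0: "p0 \<in> borel_measurable lborel" "\<And>x. 0 \<le> p0 x" and g: "g \<in> borel_measurable lborel"
    and tr: "\<And>k. k \<le> n \<Longrightarrow> (\<lambda>(x, y). tr k x y) \<in> borel_measurable (lborel \<Otimes>\<^sub>M lborel)"
      "\<And>k x y. k \<le> n \<Longrightarrow> 0 \<le> tr k x y"
  shows "(\<integral>\<^sup>+y. ennreal (markov_dens p0 tr (Suc n) y) * g (y (Suc n)) \<partial>path_space (Suc n))
       = (\<integral>\<^sup>+y. ennreal (markov_dens p0 tr n y) * (\<integral>\<^sup>+z. ennreal (tr n (y n) z) * g z \<partial>lborel) \<partial>path_space n)"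
proof -
  interpret product_sigma_finite "\<lambda>_::nat. (lborel :: 'a measure)"
    by standard
  have insert_Suc: "{0..Suc n} = insert (Suc n) {0..n}"
    by auto
  have "markov_dens p0 tr (Suc n) \<in> borel_measurable (PiM (insert (Suc n) {0..n}) (\<lambda>_. lborel))"
    using p0 tr by (intro borel_measurable_markov_dens) auto
  moreover have "(\<lambda>y. g (y (Suc n))) \<in> borel_measurable (PiM (insert (Suc n) {0..n}) (\<lambda>_. lborel))"
    using g by (intro measurable_compose[OF measurable_component_singleton, of "Suc n"]) auto
  moreover have "(\<lambda>z. tr n x z) \<in> borel_measurable lborel" for x
    using measurable_Pair2[OF tr(1)[of n], of x] by simp
  moreover have "0 \<le> markov_dens p0 tr n x" for x
    using p0 tr by (intro markov_dens_nonneg) auto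
  ultimately show ?thesis
    unfolding path_space_def insert_Suc using p0 g tr
    by (simp add: product_nn_integral_insert markov_dens_Suc_fun_upd ennreal_mult mult.assoc
        nn_integral_cmult[symmetric])
qed

lemma nn_integral_markov_dens:
  fixes p0 :: "'a::euclidean_space \<Rightarrow> real"
  assumes p0: "p0 \<in> borel_measurable lborel" "\<And>x. 0 \<le> p0 x" "(\<integral>\<^sup>+x. p0 x \<partial>lborel) = 1"
    and tr: "\<And>k. k < n \<Longrightarrow> (\<lambda>(x, y). tr k x y) \<in> borel_measurable (lborel \<Otimes>\<^sub>M lborel)"
      "\<And>k x y. k < n \<Longrightarrow> 0 \<le> tr k x y" "\<And>k x. k < n \<Longrightarrow> (\<integral>\<^sup>+z. tr k x z \<partial>lborel) = 1"
  shows "(\<integral>\<^sup>+y. markov_dens p0 tr n y \<partial>path_space n) = 1"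
  using tr
proof (induction n)
  case 0
  then show ?case
    using nn_integral_markov_dens_0[OF p0(1), of "\<lambda>_. 1"] p0 by simp
next
  case (Suc n)
  have "(\<integral>\<^sup>+y. markov_dens p0 tr (Suc n) y \<partial>path_space (Suc n))
      = (\<integral>\<^sup>+y. ennreal (markov_dens p0 tr n y) * (\<integral>\<^sup>+z. ennreal (tr n (y n) z) * 1 \<partial>lborel) \<partial>path_space n)"
    using nn_integral_markov_dens_Suc[OF p0(1,2), of "\<lambda>_. 1"] Suc.prems by simp
  also have "\<dots> = 1"
    using Suc by simp
  finally show ?case .
qed

lemma measurable_path_space_component: "k \<le> K \<Longrightarrow> (\<lambda>y. y k) \<in> borel_measurable (path_space K)"
  using measurable_component_singleton[of k "{0..K}" "\<lambda>_. lborel"] by (simp add: path_space_def)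

lemma nn_integral_law_at:
  assumes "(\<lambda>y. y k) \<in> borel_measurable M" "f \<in> borel_measurable M" "g \<in> borel_measurable lborel"
  shows "(\<integral>\<^sup>+z. g z \<partial>law_at M f k) = (\<integral>\<^sup>+y. ennreal (f y) * g (y k) \<partial>M)"
  using assms unfolding law_at_def
  by (simp add: nn_integral_distr nn_integral_density)

lemma has_bochner_integral_law_at:
  fixes g :: "'a::euclidean_space \<Rightarrow> real"
  assumes [measurable]: "(\<lambda>y. y k) \<in> borel_measurable M" "f \<in> borel_measurable M" "g \<in> borel_measurable borel"
    and f_nonneg: "\<And>y. y \<in> space M \<Longrightarrow> 0 \<le> f y"
    and g: "integrable (law_at M f k) g"
  shows "has_bochner_integral M (\<lambda>y. f y * g (y k)) (\<integral>z. g z \<partial>law_at M f k)"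
proof -
  have proj: "(\<lambda>y. y k) \<in> measurable (density M f) lborel"
    by simp
  have "has_bochner_integral (density M f) (\<lambda>y. g (y k)) (\<integral>z. g z \<partial>law_at M f k)"
    using g unfolding law_at_def
    by (simp add: has_bochner_integral_iff integrable_distr_eq[OF proj] integral_distr[OF proj])
  then show ?thesis
    using f_nonneg
    by (simp add: has_bochner_integral_iff integrable_density integral_density AE_I2)
qed

lemma AE_law_at:
  assumes [measurable]: "(\<lambda>y. y k) \<in> borel_measurable M" "f \<in> borel_measurable M"
    and P: "{z \<in> space borel. P z} \<in> sets borel" and ae: "AE z in law_at M f k. P z"
  shows "AE y in M. 0 < f y \<longrightarrow> P (y k)"
proof -
  have "(\<lambda>y. y k) \<in> measurable (density M f) lborel"
    by simp
  then have "AE y in density M f. P (y k)"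
    using ae P unfolding law_at_def by (simp add: AE_distr_iff)
  then show ?thesis
    by (simp add: AE_density)
qed

section \<open>Gibbs' inequality and the evidence lower bound\<close>

lemma diff_le_mult_ln_divide:
  fixes a b :: real
  assumes "0 \<le> a" "0 \<le> b" "0 < a \<Longrightarrow> 0 < b"
  shows "a - b \<le> a * ln (a / b)"
proof (cases "a = 0")
  case False
  then have "0 < a" "0 < b"
    using assms by auto
  then have "ln (b / a) \<le> b / a - 1"
    by (intro ln_le_minus_one) simp
  then have "a * (1 - b / a) \<le> a * ln (a / b)"
    using \<open>0 < a\<close> \<open>0 < b\<close> by (intro mult_left_mono) (simp_all add: ln_div)
  moreover have "a * (1 - b / a) = a - b"
    using \<open>0 < a\<close> by (simp add: field_simps)
  ultimately show ?thesis
    by simp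
qed (use assms in simp)

lemma KL_dens_nonneg:
  assumes q: "prob_density M q" and g: "prob_density M g"
    and abs_cont: "AE x in M. 0 < q x \<longrightarrow> 0 < g x"
    and int: "integrable M (\<lambda>x. q x * ln (q x / g x))"
  shows "0 \<le> KL_dens M q g"
proof -
  have "AE x in M. q x - g x \<le> q x * ln (q x / g x)"
    using abs_cont AE_space
  proof eventually_elim
    case (elim x)
    then show ?case
      using q g by (intro diff_le_mult_ln_divide) (auto simp: prob_density_def)
  qed
  then have "(\<integral>x. q x - g x \<partial>M) \<le> KL_dens M q g"
    using q g int unfolding KL_dens_def prob_density_def by (intro integral_mono_AE) auto
  also have "(\<integral>x. q x - g x \<partial>M) = 0"
    using q g unfolding prob_density_def by simp
  finally show ?thesis .
qed

lemma prob_density_tilt_at: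
  fixes p0 \<pi> :: "'a::euclidean_space \<Rightarrow> real"
  assumes [measurable]: "(\<lambda>y. y k) \<in> borel_measurable M" "p \<in> borel_measurable M"
      "p0 \<in> borel_measurable borel" "\<pi> \<in> borel_measurable borel"
    and p_nonneg: "\<And>y. y \<in> space M \<Longrightarrow> 0 \<le> p y"
    and law: "law_at M p k = density lborel (\<lambda>z. ennreal (p0 z))"
    and p0_pos: "\<And>z. 0 < p0 z"
    and \<pi>: "prob_density lborel \<pi>"
  shows "prob_density M (\<lambda>y. p y * (\<pi> (y k) / p0 (y k)))"
proof -
  have \<pi>_nonneg: "0 \<le> \<pi> z" for z
    using \<pi> by (simp add: prob_density_def)
  have "(\<integral>\<^sup>+y. ennreal (p y * (\<pi> (y k) / p0 (y k))) \<partial>M)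
      = (\<integral>\<^sup>+y. ennreal (p y) * ennreal (\<pi> (y k) / p0 (y k)) \<partial>M)"
    by (intro nn_integral_cong ennreal_mult) (auto intro: p_nonneg divide_nonneg_pos \<pi>_nonneg p0_pos)
  also have "\<dots> = (\<integral>\<^sup>+z. ennreal (\<pi> z / p0 z) \<partial>law_at M p k)"
    by (simp add: nn_integral_law_at)
  also have "\<dots> = (\<integral>\<^sup>+z. ennreal (p0 z) * ennreal (\<pi> z / p0 z) \<partial>lborel)"
    unfolding law by (simp add: nn_integral_density)
  also have "\<dots> = (\<integral>\<^sup>+z. ennreal (\<pi> z) \<partial>lborel)"
    using p0_pos \<pi>_nonneg by (intro nn_integral_cong) (simp add: ennreal_mult[symmetric] less_imp_le less_imp_neq[symmetric])
  also have "\<dots> = 1"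
    using \<pi> \<pi>_nonneg by (simp add: prob_density_def nn_integral_eq_integral)
  finally have nn_integral: "(\<integral>\<^sup>+y. ennreal (p y * (\<pi> (y k) / p0 (y k))) \<partial>M) = 1" .
  have nonneg: "0 \<le> p y * (\<pi> (y k) / p0 (y k))" if "y \<in> space M" for y
    using p_nonneg[OF that] \<pi>_nonneg p0_pos[of "y k"] by simp
  show ?thesis
    unfolding prob_density_def using nonneg nn_integral
    by (auto intro!: integrableI_nonneg simp: integral_eq_nn_integral)
qed

lemma has_bochner_integral_KL_tilt_at:
  fixes p0 \<pi> :: "'a::euclidean_space \<Rightarrow> real"
  assumes [measurable]: "(\<lambda>y. y k) \<in> borel_measurable M" "q \<in> borel_measurable M" "p \<in> borel_measurable M"
      "p0 \<in> borel_measurable borel" "\<pi> \<in> borel_measurable borel"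
    and q_nonneg: "\<And>y. y \<in> space M \<Longrightarrow> 0 \<le> q y"
    and p0_pos: "\<And>z. 0 < p0 z"
    and abs_cont: "AE y in M. 0 < q y \<longrightarrow> 0 < p y \<and> 0 < \<pi> (y k)"
    and KL: "integrable M (\<lambda>y. q y * ln (q y / p y))"
    and terminal: "integrable (law_at M q k) (\<lambda>z. ln (p0 z / \<pi> z))"
  shows "has_bochner_integral M (\<lambda>y. q y * ln (q y / (p y * (\<pi> (y k) / p0 (y k)))))
           (KL_dens M q p + (\<integral>z. ln (p0 z / \<pi> z) \<partial>law_at M q k))"
proof -
  have "has_bochner_integral M (\<lambda>y. q y * ln (q y / p y) + q y * ln (p0 (y k) / \<pi> (y k)))
          (KL_dens M q p + (\<integral>z. ln (p0 z / \<pi> z) \<partial>law_at M q k))"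
    unfolding KL_dens_def using KL has_bochner_integral_law_at[OF _ _ _ q_nonneg terminal]
    by (intro has_bochner_integral_add) (auto simp: has_bochner_integral_iff)
  moreover have "AE y in M. q y * ln (q y / p y) + q y * ln (p0 (y k) / \<pi> (y k))
                         = q y * ln (q y / (p y * (\<pi> (y k) / p0 (y k))))"
    using abs_cont AE_space
  proof eventually_elim
    case (elim y)
    show ?case
    proof (cases "q y = 0")
      case False
      with q_nonneg[OF elim(2)] have "0 < q y"
        by simp
      with elim(1) have "0 < q y" "0 < p y" "0 < \<pi> (y k)"
        by auto
      then show ?thesis
        using p0_pos[of "y k"] by (simp add: ln_div ln_mult algebra_simps)
    qed simp
  qed
  moreover have "(\<lambda>y. q y * ln (q y / p y) + q y * ln (p0 (y k) / \<pi> (y k))) \<in> borel_measurable M"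
    and "(\<lambda>y. q y * ln (q y / (p y * (\<pi> (y k) / p0 (y k))))) \<in> borel_measurable M"
    by measurable
  ultimately show ?thesis
    using has_bochner_integral_cong_AE by blast
qed

lemma integral_ln_importance_weight:
  fixes p0 \<gamma> :: "'a::euclidean_space \<Rightarrow> real"
  assumes [measurable]: "(\<lambda>y. y k) \<in> borel_measurable M" "q \<in> borel_measurable M" "p \<in> borel_measurable M"
      "p0 \<in> borel_measurable borel" "\<gamma> \<in> borel_measurable borel"
    and q: "prob_density M q"
    and p0_pos: "\<And>z. 0 < p0 z" and Z: "0 < Z"
    and abs_cont: "AE y in M. 0 < q y \<longrightarrow> 0 < p y \<and> 0 < \<gamma> (y k)"
    and KL: "integrable M (\<lambda>y. q y * ln (q y / (p y * (\<gamma> (y k) / Z / p0 (y k)))))"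
  shows "(\<integral>y. ln (\<gamma> (y k) * p y / (p0 (y k) * q y)) \<partial>density M q)
       = ln Z - KL_dens M q (\<lambda>y. p y * (\<gamma> (y k) / Z / p0 (y k)))"
proof -
  have q_nonneg: "\<And>y. y \<in> space M \<Longrightarrow> 0 \<le> q y"
    using q by (simp add: prob_density_def)
  have "AE y in M. q y * ln (\<gamma> (y k) * p y / (p0 (y k) * q y))
                 = ln Z * q y - q y * ln (q y / (p y * (\<gamma> (y k) / Z / p0 (y k))))"
    using abs_cont AE_space
  proof eventually_elim
    case (elim y)
    show ?case
    proof (cases "q y = 0")
      case False
      with q_nonneg[OF elim(2)] have "0 < q y"
        by simp
      with elim(1) have "0 < q y" "0 < p y" "0 < \<gamma> (y k)"
        by auto
      then show ?thesis
        using p0_pos[of "y k"] Z by (simp add: ln_div ln_mult algebra_simps)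
    qed simp
  qed
  then have "(\<integral>y. q y * ln (\<gamma> (y k) * p y / (p0 (y k) * q y)) \<partial>M)
      = (\<integral>y. ln Z * q y - q y * ln (q y / (p y * (\<gamma> (y k) / Z / p0 (y k)))) \<partial>M)"
    by (intro integral_cong_AE; measurable)
  then have "(\<integral>y. ln (\<gamma> (y k) * p y / (p0 (y k) * q y)) \<partial>density M q)
      = (\<integral>y. ln Z * q y - q y * ln (q y / (p y * (\<gamma> (y k) / Z / p0 (y k)))) \<partial>M)"
    using q_nonneg by (simp add: integral_density)
  also have "\<dots> = ln Z - KL_dens M q (\<lambda>y. p y * (\<gamma> (y k) / Z / p0 (y k)))"
    using q KL by (simp add: prob_density_def KL_dens_def)
  finally show ?thesis .
qed

lemma KL_plus_terminal_nonneg_and_elbo: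
  fixes p0 \<gamma> :: "'a::euclidean_space \<Rightarrow> real"
  assumes [measurable]: "(\<lambda>y. y k) \<in> borel_measurable M" "p \<in> borel_measurable M"
      "p0 \<in> borel_measurable borel" "\<gamma> \<in> borel_measurable borel"
    and p_nonneg: "\<And>y. y \<in> space M \<Longrightarrow> 0 \<le> p y"
    and law: "law_at M p k = density lborel (\<lambda>z. ennreal (p0 z))"
    and p0_pos: "\<And>z. 0 < p0 z"
    and \<gamma>: "\<And>z. 0 \<le> \<gamma> z" "integrable lborel \<gamma>" "0 < integral\<^sup>L lborel \<gamma>"
    and q: "prob_density M q"
    and abs_cont: "AE y in M. 0 < q y \<longrightarrow> 0 < p y"
    and \<gamma>_pos: "AE z in law_at M q k. 0 < \<gamma> z"
    and KL: "integrable M (\<lambda>y. q y * ln (q y / p y))"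
    and terminal: "integrable (law_at M q k) (\<lambda>z. ln (p0 z / (\<gamma> z / integral\<^sup>L lborel \<gamma>)))"
  shows "0 \<le> KL_dens M q p + (\<integral>z. ln (p0 z / (\<gamma> z / integral\<^sup>L lborel \<gamma>)) \<partial>law_at M q k)"
    and "(\<integral>y. ln (\<gamma> (y k) * p y / (p0 (y k) * q y)) \<partial>density M q) \<le> ln (integral\<^sup>L lborel \<gamma>)"
proof -
  let ?Z = "integral\<^sup>L lborel \<gamma>"
  let ?G = "\<lambda>y. p y * (\<gamma> (y k) / ?Z / p0 (y k))"
  have [measurable]: "q \<in> borel_measurable M" and q_nonneg: "\<And>y. y \<in> space M \<Longrightarrow> 0 \<le> q y"
    using q by (auto simp: prob_density_def)
  have \<pi>: "prob_density lborel (\<lambda>z. \<gamma> z / ?Z)"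
    using \<gamma> by (simp add: prob_density_def)
  have G: "prob_density M ?G"
    by (rule prob_density_tilt_at[OF _ _ _ _ p_nonneg law p0_pos \<pi>]; measurable)
  have "AE y in M. 0 < q y \<longrightarrow> 0 < \<gamma> (y k)"
    using \<gamma>_pos by (intro AE_law_at) auto
  then have abs_cont_\<gamma>: "AE y in M. 0 < q y \<longrightarrow> 0 < p y \<and> 0 < \<gamma> (y k)"
    using abs_cont by eventually_elim auto
  then have abs_cont_\<pi>: "AE y in M. 0 < q y \<longrightarrow> 0 < p y \<and> 0 < \<gamma> (y k) / ?Z"
    by eventually_elim (simp add: \<gamma>(3))
  have KL_G: "has_bochner_integral M (\<lambda>y. q y * ln (q y / ?G y))
      (KL_dens M q p + (\<integral>z. ln (p0 z / (\<gamma> z / ?Z)) \<partial>law_at M q k))"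
    by (rule has_bochner_integral_KL_tilt_at[of k M q p p0 "\<lambda>z. \<gamma> z / ?Z",
          OF _ _ _ _ _ q_nonneg p0_pos abs_cont_\<pi> KL terminal]; measurable)
  then have KL_G_integrable: "integrable M (\<lambda>y. q y * ln (q y / ?G y))"
    by (simp add: has_bochner_integral_iff)
  have "AE y in M. 0 < q y \<longrightarrow> 0 < ?G y"
    using abs_cont_\<pi> by eventually_elim (metis divide_pos_pos mult_pos_pos p0_pos)
  then have KL_G_nonneg: "0 \<le> KL_dens M q ?G"
    by (rule KL_dens_nonneg[OF q G _ KL_G_integrable])
  then show "0 \<le> KL_dens M q p + (\<integral>z. ln (p0 z / (\<gamma> z / ?Z)) \<partial>law_at M q k)"
    using KL_G by (simp add: KL_dens_def has_bochner_integral_iff)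
  have "(\<integral>y. ln (\<gamma> (y k) * p y / (p0 (y k) * q y)) \<partial>density M q) = ln ?Z - KL_dens M q ?G"
    by (rule integral_ln_importance_weight[OF _ _ _ _ _ q p0_pos \<gamma>(3) abs_cont_\<gamma> KL_G_integrable];
        measurable)
  with KL_G_nonneg show "(\<integral>y. ln (\<gamma> (y k) * p y / (p0 (y k) * q y)) \<partial>density M q) \<le> ln ?Z"
    by simp
qed

lemma markov_reference_KL_and_elbo:
  fixes p0 \<gamma> :: "'a::euclidean_space \<Rightarrow> real"
    and tr :: "nat \<Rightarrow> 'a \<Rightarrow> 'a \<Rightarrow> real"
    and q :: "(nat \<Rightarrow> 'a) \<Rightarrow> real"
  assumes p0: "p0 \<in> borel_measurable lborel" "\<And>z. 0 < p0 z"
    and \<gamma>: "\<forall>y. 0 \<le> \<gamma> y" "\<gamma> \<in> borel_measurable lborel" "integrable lborel \<gamma>"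
      "integral\<^sup>L lborel \<gamma> > 0"
    and tr: "\<forall>k<K. trans_density (tr k)"
    and q: "prob_density (path_space K) q"
    and stationary: "law_at (path_space K) (markov_dens p0 tr K) K = density lborel (\<lambda>y. ennreal (p0 y))"
    and abs_cont: "AE y in path_space K. q y > 0 \<longrightarrow> markov_dens p0 tr K y > 0"
    and \<gamma>_pos: "AE y in law_at (path_space K) q K. \<gamma> y > 0"
    and KL: "integrable (path_space K) (\<lambda>y. q y * ln (q y / markov_dens p0 tr K y))"
    and terminal: "integrable (law_at (path_space K) q K) (\<lambda>y. ln (p0 y / (\<gamma> y / integral\<^sup>L lborel \<gamma>)))"
  shows "KL_dens (path_space K) q (markov_dens p0 tr K)
           + (\<integral>y. ln (p0 y / (\<gamma> y / integral\<^sup>L lborel \<gamma>)) \<partial>law_at (path_space K) q K) \<ge> 0"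
    and "(\<integral>y. ln (\<gamma> (y K) * markov_dens p0 tr K y / (p0 (y K) * q y))
           \<partial>density (path_space K) (\<lambda>y. ennreal (q y))) \<le> ln (integral\<^sup>L lborel \<gamma>)"
proof -
  have "markov_dens p0 tr K \<in> borel_measurable (path_space K)"
    using tr p0 unfolding path_space_def trans_density_def by (intro borel_measurable_markov_dens) auto
  moreover have "0 \<le> markov_dens p0 tr K y" for y
    using tr p0 unfolding trans_density_def prob_density_def
    by (intro markov_dens_nonneg) (auto intro: less_imp_le)
  ultimately show "KL_dens (path_space K) q (markov_dens p0 tr K)
           + (\<integral>y. ln (p0 y / (\<gamma> y / integral\<^sup>L lborel \<gamma>)) \<partial>law_at (path_space K) q K) \<ge> 0"
    and "(\<integral>y. ln (\<gamma> (y K) * markov_dens p0 tr K y / (p0 (y K) * q y))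
           \<partial>density (path_space K) (\<lambda>y. ennreal (q y))) \<le> ln (integral\<^sup>L lborel \<gamma>)"
    using KL_plus_terminal_nonneg_and_elbo[OF measurable_path_space_component[of K K] _ _ _ _ stationary p0(2)
        _ \<gamma>(3,4) q abs_cont \<gamma>_pos KL terminal] p0(1) \<gamma>(1,2)
    by auto
qed

section \<open>Gaussian densities\<close>

lemma gauss_dens_nonneg: "0 \<le> gauss_dens v m y"
  unfolding gauss_dens_def by simp

lemma gauss_dens_pos: "0 < v \<Longrightarrow> 0 < gauss_dens v m y"
  unfolding gauss_dens_def by simp

lemma borel_measurable_gauss_dens[measurable]:
  "gauss_dens v m \<in> borel_measurable (lborel :: 'a::euclidean_space measure)"
  unfolding gauss_dens_def by measurable

lemma borel_measurable_gauss_dens_scaleR[measurable]: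
  "(\<lambda>(x, y). gauss_dens v (c *\<^sub>R x) (y::'a::euclidean_space)) \<in> borel_measurable (lborel \<Otimes>\<^sub>M lborel)"
  unfolding gauss_dens_def by measurable

lemma norm_power2_eq_sum_Basis: "(norm (x::'a::euclidean_space))\<^sup>2 = (\<Sum>b\<in>Basis. (x \<bullet> b)\<^sup>2)"
  unfolding power2_norm_eq_inner by (subst euclidean_inner) (simp add: power2_eq_square)

lemma gauss_dens_eq_prod_normal_density:
  fixes m y :: "'a::euclidean_space"
  assumes "0 < v"
  shows "gauss_dens v m y = (\<Prod>b\<in>Basis. normal_density (m \<bullet> b) (sqrt v) (y \<bullet> b))"
proof -
  have "normal_density (m \<bullet> b) (sqrt v) (y \<bullet> b)
      = (2 * pi * v) powr (- 1 / 2) * exp (- ((y - m) \<bullet> b)\<^sup>2 / (2 * v))" for b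
    using assms by (simp add: normal_density_def inner_diff_left powr_minus_divide powr_half_sqrt)
  then have "(\<Prod>b\<in>Basis. normal_density (m \<bullet> b) (sqrt v) (y \<bullet> b))
      = ((2 * pi * v) powr (- 1 / 2)) ^ DIM('a) * exp (\<Sum>b\<in>Basis. - ((y - m) \<bullet> b)\<^sup>2 / (2 * v))"
    by (simp add: prod.distrib exp_sum)
  also have "((2 * pi * v) powr (- 1 / 2)) ^ DIM('a) = (2 * pi * v) powr (- real DIM('a) / 2)"
    using assms by (simp add: powr_power)
  also have "(\<Sum>b\<in>Basis. - ((y - m) \<bullet> b)\<^sup>2 / (2 * v)) = - (norm (y - m))\<^sup>2 / (2 * v)"
    by (simp add: norm_power2_eq_sum_Basis sum_negf sum_divide_distrib)
  finally show ?thesis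
    unfolding gauss_dens_def by simp
qed

lemma normal_moment_2:
  assumes "0 < s"
  shows "has_bochner_integral lborel (\<lambda>x. normal_density \<mu> s x * x\<^sup>2) (\<mu>\<^sup>2 + s\<^sup>2)"
proof -
  have "has_bochner_integral lborel
      (\<lambda>x. normal_density \<mu> s x * (x - \<mu>)\<^sup>2 + 2 * \<mu> * (normal_density \<mu> s x * x)
           - \<mu>\<^sup>2 * normal_density \<mu> s x)
      (s\<^sup>2 + 2 * \<mu> * \<mu> - \<mu>\<^sup>2 * 1)"
    using normal_moment_even[OF assms, of \<mu> 1] normal_moment_nz_1[OF assms, of \<mu>]
      integrable_normal_density[OF assms, of \<mu>] integral_normal_density[OF assms, of \<mu>]
    by (intro has_bochner_integral_add has_bochner_integral_diff has_bochner_integral_mult_right)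
       (auto simp: has_bochner_integral_iff)
  then show ?thesis
    by (simp add: power2_eq_square algebra_simps)
qed

lemma nn_integral_gauss_dens:
  fixes m :: "'a::euclidean_space"
  assumes "0 < v"
  shows "(\<integral>\<^sup>+y. ennreal (gauss_dens v m y) \<partial>lborel) = 1"
proof -
  have "(\<integral>\<^sup>+y. ennreal (gauss_dens v m y) \<partial>lborel)
      = (\<integral>\<^sup>+y. (\<Prod>b\<in>Basis. ennreal (normal_density (m \<bullet> b) (sqrt v) (y \<bullet> b))) \<partial>lborel)"
    using assms by (simp add: gauss_dens_eq_prod_normal_density prod_ennreal)
  also have "\<dots> = (\<Prod>b\<in>Basis. \<integral>\<^sup>+x. ennreal (normal_density (m \<bullet> b) (sqrt v) x) \<partial>lborel)"
    by (rule nn_integral_lborel_prod) auto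
  also have "\<dots> = 1"
    using assms by (simp add: nn_integral_eq_integral)
  finally show ?thesis .
qed

lemma nn_integral_gauss_dens_norm_power2:
  fixes m :: "'a::euclidean_space"
  assumes v: "0 < v"
  shows "(\<integral>\<^sup>+y. ennreal (gauss_dens v m y) * ennreal ((norm y)\<^sup>2) \<partial>lborel)
       = ennreal ((norm m)\<^sup>2 + real DIM('a) * v)"
proof -
  \<comment> \<open>|y|^2 = \<Sum>c. (y \<bullet> c)^2, and each summand factorises over the coordinates\<close>
  let ?g = "\<lambda>c b x. ennreal (normal_density (m \<bullet> b) (sqrt v) x * (if b = c then x\<^sup>2 else 1))"
  have factor: "ennreal (gauss_dens v m y) * ennreal ((norm y)\<^sup>2) = (\<Sum>c\<in>Basis. \<Prod>b\<in>Basis. ?g c b (y \<bullet> b))"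
    for y
  proof -
    have "gauss_dens v m y * (norm y)\<^sup>2 = (\<Sum>c\<in>Basis. gauss_dens v m y * (y \<bullet> c)\<^sup>2)"
      by (simp add: norm_power2_eq_sum_Basis sum_distrib_left)
    also have "\<dots> = (\<Sum>c\<in>Basis. \<Prod>b\<in>Basis. normal_density (m \<bullet> b) (sqrt v) (y \<bullet> b)
                                              * (if b = c then (y \<bullet> b)\<^sup>2 else 1))"
      using v by (intro sum.cong refl) (simp add: prod.distrib gauss_dens_eq_prod_normal_density prod.delta)
    finally have "ennreal (gauss_dens v m y * (norm y)\<^sup>2) = (\<Sum>c\<in>Basis. \<Prod>b\<in>Basis. ?g c b (y \<bullet> b))"
      using v by (simp add: prod_ennreal prod_nonneg sum_nonneg)
    then show ?thesis
      by (simp add: ennreal_mult gauss_dens_nonneg)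
  qed
  have coordinate: "(\<integral>\<^sup>+x. ?g c b x \<partial>lborel) = (if b = c then ennreal ((m \<bullet> c)\<^sup>2 + v) else 1)" for b c
  proof -
    have "has_bochner_integral lborel (\<lambda>x. normal_density (m \<bullet> b) (sqrt v) x * x\<^sup>2) ((m \<bullet> b)\<^sup>2 + v)"
      using normal_moment_2[of "sqrt v" "m \<bullet> b"] v by simp
    then show ?thesis
      using v by (auto simp: nn_integral_eq_integral has_bochner_integral_iff)
  qed
  have "(\<integral>\<^sup>+y. ennreal (gauss_dens v m y) * ennreal ((norm y)\<^sup>2) \<partial>lborel)
      = (\<Sum>c\<in>Basis. \<integral>\<^sup>+y. (\<Prod>b\<in>Basis. ?g c b (y \<bullet> b)) \<partial>lborel)"
    unfolding factor by (rule nn_integral_sum) auto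
  also have "\<dots> = (\<Sum>c\<in>Basis. \<Prod>b\<in>Basis. \<integral>\<^sup>+x. ?g c b x \<partial>lborel)"
    by (intro sum.cong refl nn_integral_lborel_prod) auto
  also have "\<dots> = (\<Sum>c\<in>Basis. ennreal ((m \<bullet> c)\<^sup>2 + v))"
    by (simp add: coordinate prod.delta)
  also have "\<dots> = ennreal (\<Sum>c\<in>Basis. (m \<bullet> c)\<^sup>2 + v)"
    using v by (intro sum_ennreal) simp
  also have "\<dots> = ennreal ((norm m)\<^sup>2 + real DIM('a) * v)"
    by (simp add: sum.distrib norm_power2_eq_sum_Basis)
  finally show ?thesis .
qed

section \<open>Second moments of Gaussian autoregressive chains\<close>

lemma nn_integral_markov_dens_gauss_AR_norm_power2:
  fixes p0 :: "'a::euclidean_space \<Rightarrow> real" and c v :: "nat \<Rightarrow> real"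
  assumes p0: "p0 \<in> borel_measurable lborel" "\<And>x. 0 \<le> p0 x" and v: "0 < v n"
  defines "p \<equiv> markov_dens p0 (\<lambda>k x. gauss_dens (v k) (c k *\<^sub>R x))"
  shows "(\<integral>\<^sup>+y. p (Suc n) y * ennreal ((norm (y (Suc n)))\<^sup>2) \<partial>path_space (Suc n))
       = ennreal ((c n)\<^sup>2) * (\<integral>\<^sup>+y. p n y * ennreal ((norm (y n))\<^sup>2) \<partial>path_space n)
         + ennreal (DIM('a) * v n) * (\<integral>\<^sup>+y. p n y \<partial>path_space n)"
proof -
  have p_nonneg: "0 \<le> p n y" for y
    unfolding p_def using p0 by (intro markov_dens_nonneg) (auto simp: gauss_dens_nonneg)
  have [measurable]: "p n \<in> borel_measurable (path_space n)"
    unfolding p_def path_space_def using p0 by (intro borel_measurable_markov_dens) auto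
  note measurable_path_space_component[of n n, measurable]
  have "(\<integral>\<^sup>+y. p (Suc n) y * ennreal ((norm (y (Suc n)))\<^sup>2) \<partial>path_space (Suc n))
      = (\<integral>\<^sup>+y. p n y * (\<integral>\<^sup>+z. gauss_dens (v n) (c n *\<^sub>R y n) z * ennreal ((norm z)\<^sup>2) \<partial>lborel) \<partial>path_space n)"
    unfolding p_def using p0 by (intro nn_integral_markov_dens_Suc) (auto simp: gauss_dens_nonneg)
  also have "\<dots> = (\<integral>\<^sup>+y. p n y * ennreal ((c n)\<^sup>2 * (norm (y n))\<^sup>2 + DIM('a) * v n) \<partial>path_space n)"
    using v by (simp add: nn_integral_gauss_dens_norm_power2 power_mult_distrib)
  also have "\<dots> = (\<integral>\<^sup>+y. ennreal ((c n)\<^sup>2) * (p n y * ennreal ((norm (y n))\<^sup>2))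
                        + ennreal (DIM('a) * v n) * p n y \<partial>path_space n)"
    using v p_nonneg by (intro nn_integral_cong) (simp add: ennreal_plus ennreal_mult' algebra_simps)
  also have "\<dots> = ennreal ((c n)\<^sup>2) * (\<integral>\<^sup>+y. p n y * ennreal ((norm (y n))\<^sup>2) \<partial>path_space n)
                 + ennreal (DIM('a) * v n) * (\<integral>\<^sup>+y. p n y \<partial>path_space n)"
  proof -
    have "(\<lambda>y. ennreal ((c n)\<^sup>2) * (p n y * ennreal ((norm (y n))\<^sup>2))) \<in> borel_measurable (path_space n)"
      and "(\<lambda>y. ennreal (DIM('a) * v n) * p n y) \<in> borel_measurable (path_space n)"
      by measurable
    then show ?thesis
      by (simp add: nn_integral_add nn_integral_cmult)
  qed
  finally show ?thesis .
qed

lemma gauss_AR_second_moment_gt: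
  fixes \<sigma> :: real and c v :: "nat \<Rightarrow> real"
  assumes \<sigma>: "0 < \<sigma>" and K: "1 \<le> K" and v: "\<And>k. k < K \<Longrightarrow> 0 < v k"
    and expanding: "\<And>k. k < K \<Longrightarrow> \<sigma>\<^sup>2 < (c k)\<^sup>2 * \<sigma>\<^sup>2 + v k"
  defines "p \<equiv> markov_dens (gauss_dens (\<sigma>\<^sup>2) (0::'a::euclidean_space)) (\<lambda>k x. gauss_dens (v k) (c k *\<^sub>R x))"
  shows "ennreal (DIM('a) * \<sigma>\<^sup>2) < (\<integral>\<^sup>+y. p K y * ennreal ((norm (y K))\<^sup>2) \<partial>path_space K)"
proof -
  define s where "s = real DIM('a) * \<sigma>\<^sup>2"
  define m where "m n = (\<integral>\<^sup>+y. p n y * ennreal ((norm (y n))\<^sup>2) \<partial>path_space n)" for n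
  have mass: "(\<integral>\<^sup>+y. p n y \<partial>path_space n) = 1" if "n \<le> K" for n
    unfolding p_def using that \<sigma> v
    by (intro nn_integral_markov_dens) (auto simp: gauss_dens_nonneg nn_integral_gauss_dens)
  have m_0: "m 0 = s"
    using nn_integral_markov_dens_0[of "gauss_dens (\<sigma>\<^sup>2) (0::'a)" "\<lambda>z. ennreal ((norm z)\<^sup>2)"] \<sigma>
    by (simp add: m_def p_def s_def nn_integral_gauss_dens_norm_power2)
  have m_Suc: "ennreal s < m (Suc n)" if "n < K" "ennreal s \<le> m n" for n
  proof -
    have "s < (c n)\<^sup>2 * s + DIM('a) * v n"
      using mult_strict_left_mono[OF expanding[OF \<open>n < K\<close>], of "real DIM('a)"]
      by (simp add: s_def algebra_simps)
    moreover have "0 < s"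
      using \<sigma> by (simp add: s_def)
    ultimately have "ennreal s < ennreal ((c n)\<^sup>2 * s + DIM('a) * v n)"
      by (intro ennreal_lessI) auto
    also have "\<dots> = ennreal ((c n)\<^sup>2) * ennreal s + ennreal (DIM('a) * v n)"
      using v[OF \<open>n < K\<close>] by (simp add: s_def ennreal_plus ennreal_mult)
    also have "\<dots> \<le> ennreal ((c n)\<^sup>2) * m n + ennreal (DIM('a) * v n)"
      using that by (intro add_right_mono mult_left_mono) auto
    also have "\<dots> = m (Suc n)"
      using nn_integral_markov_dens_gauss_AR_norm_power2[of "gauss_dens (\<sigma>\<^sup>2) (0::'a)" v n c]
        v[OF \<open>n < K\<close>] mass[of n] \<open>n < K\<close>
      by (simp add: m_def p_def gauss_dens_nonneg)
    finally show ?thesis .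
  qed
  have "ennreal s \<le> m n" if "n \<le> K" for n
    using that by (induction n) (auto simp: m_0 Suc_le_eq intro!: less_imp_le[OF m_Suc])
  then have "ennreal s < m (Suc (K - 1))"
    using K by (intro m_Suc) auto
  then show ?thesis
    using K by (simp add: m_def s_def)
qed

lemma gauss_AR_law_ne_gauss:
  fixes \<sigma> :: real and c v :: "nat \<Rightarrow> real"
  assumes \<sigma>: "0 < \<sigma>" and K: "1 \<le> K" and v: "\<And>k. k < K \<Longrightarrow> 0 < v k"
    and expanding: "\<And>k. k < K \<Longrightarrow> \<sigma>\<^sup>2 < (c k)\<^sup>2 * \<sigma>\<^sup>2 + v k"
  defines "p \<equiv> markov_dens (gauss_dens (\<sigma>\<^sup>2) (0::'a::euclidean_space)) (\<lambda>k x. gauss_dens (v k) (c k *\<^sub>R x))"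
  shows "law_at (path_space K) (p K) K \<noteq> density lborel (\<lambda>y. ennreal (gauss_dens (\<sigma>\<^sup>2) (0::'a) y))"
proof
  assume law: "law_at (path_space K) (p K) K = density lborel (\<lambda>y. ennreal (gauss_dens (\<sigma>\<^sup>2) 0 y))"
  have "p K \<in> borel_measurable (path_space K)"
    unfolding p_def path_space_def by (intro borel_measurable_markov_dens) auto
  then have "(\<integral>\<^sup>+y. p K y * ennreal ((norm (y K))\<^sup>2) \<partial>path_space K)
      = (\<integral>\<^sup>+z. ennreal ((norm z)\<^sup>2) \<partial>law_at (path_space K) (p K) K)"
    by (intro nn_integral_law_at[symmetric]) (simp_all add: measurable_path_space_component)
  also have "\<dots> = (\<integral>\<^sup>+z. ennreal (gauss_dens (\<sigma>\<^sup>2) (0::'a) z) * ennreal ((norm z)\<^sup>2) \<partial>lborel)"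
    by (simp add: law nn_integral_density)
  also have "\<dots> = ennreal (DIM('a) * \<sigma>\<^sup>2)"
    using \<sigma> by (simp add: nn_integral_gauss_dens_norm_power2)
  moreover have "ennreal (DIM('a) * \<sigma>\<^sup>2) < (\<integral>\<^sup>+y. p K y * ennreal ((norm (y K))\<^sup>2) \<partial>path_space K)"
    unfolding p_def by (rule gauss_AR_second_moment_gt[OF \<sigma> K v expanding])
  ultimately show False
    by simp
qed

lemma em_trans_law_ne_gauss:
  fixes \<sigma> T :: real and \<beta> :: "real \<Rightarrow> real" and K :: nat
  assumes \<sigma>: "0 < \<sigma>" and K: "1 \<le> K" and T: "0 < T" and \<beta>: "\<forall>t\<in>{0..T}. 0 < \<beta> t"
  shows "law_at (path_space K) (markov_dens (gauss_dens (\<sigma>\<^sup>2) 0) (em_trans \<sigma> \<beta> T K) K) K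
           \<noteq> density lborel (\<lambda>y. ennreal (gauss_dens (\<sigma>\<^sup>2) (0::'a::euclidean_space) y))"
proof -
  define \<delta> where "\<delta> = T / real K"
  define b where "b k = \<beta> (T - real k * \<delta>)" for k :: nat
  define v where "v k = 2 * \<sigma>\<^sup>2 * b k * \<delta>" for k :: nat
  define c where "c k = 1 - \<delta> * b k" for k :: nat
  have em_trans: "em_trans \<sigma> \<beta> T K = (\<lambda>k x. gauss_dens (v k) (c k *\<^sub>R x))"
    by (simp add: fun_eq_iff em_trans_def Let_def v_def c_def b_def \<delta>_def)
  have \<delta>: "0 < \<delta>"
    using T K by (simp add: \<delta>_def)
  have b: "0 < b k" if "k < K" for k
  proof -
    have "real k * \<delta> < T"
      using that T K by (simp add: \<delta>_def field_simps)
    then show ?thesis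
      using \<beta> \<delta> by (simp add: b_def)
  qed
  have v: "0 < v k" if "k < K" for k
    using b[OF that] \<delta> \<sigma> by (simp add: v_def)
  have expanding: "\<sigma>\<^sup>2 < (c k)\<^sup>2 * \<sigma>\<^sup>2 + v k" if "k < K" for k
  proof -
    have "(c k)\<^sup>2 * \<sigma>\<^sup>2 + v k = \<sigma>\<^sup>2 + \<sigma>\<^sup>2 * (\<delta> * b k)\<^sup>2"
      by (simp add: c_def v_def power2_eq_square algebra_simps)
    then show ?thesis
      using \<sigma> \<delta> b[OF that] by simp
  qed
  show ?thesis
    using gauss_AR_law_ne_gauss[OF \<sigma> K v expanding] by (simp add: em_trans)
qed

theorem proposition2:
  fixes \<sigma> :: real and K :: nat
    and \<gamma> :: "'a::euclidean_space \<Rightarrow> real"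
    and tr :: "nat \<Rightarrow> 'a \<Rightarrow> 'a \<Rightarrow> real"
    and q :: "(nat \<Rightarrow> 'a) \<Rightarrow> real"
  assumes "\<sigma> > 0" and "K \<ge> 1"
  shows
   "((\<forall>y. 0 \<le> \<gamma> y) \<and> \<gamma> \<in> borel_measurable lborel \<and> integrable lborel \<gamma>
       \<and> integral\<^sup>L lborel \<gamma> > 0
     \<and> (\<forall>k<K. trans_density (tr k))
     \<and> prob_density (path_space K) q
     \<and> law_at (path_space K) (markov_dens (gauss_dens (\<sigma>\<^sup>2) 0) tr K) K
         = density lborel (\<lambda>y. ennreal (gauss_dens (\<sigma>\<^sup>2) 0 y))
     \<and> (AE y in path_space K. q y > 0 \<longrightarrow> markov_dens (gauss_dens (\<sigma>\<^sup>2) 0) tr K y > 0)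
     \<and> (AE y in law_at (path_space K) q K. \<gamma> y > 0)
     \<and> integrable (path_space K)
         (\<lambda>y. q y * ln (q y / markov_dens (gauss_dens (\<sigma>\<^sup>2) 0) tr K y))
     \<and> integrable (law_at (path_space K) q K)
         (\<lambda>y. ln (gauss_dens (\<sigma>\<^sup>2) 0 y / (\<gamma> y / integral\<^sup>L lborel \<gamma>)))
     \<longrightarrow>
       KL_dens (path_space K) q (markov_dens (gauss_dens (\<sigma>\<^sup>2) 0) tr K)
         + (\<integral>y. ln (gauss_dens (\<sigma>\<^sup>2) 0 y / (\<gamma> y / integral\<^sup>L lborel \<gamma>))
              \<partial>law_at (path_space K) q K) \<ge> 0
     \<and> (\<integral>y. ln (\<gamma> (y K) * markov_dens (gauss_dens (\<sigma>\<^sup>2) 0) tr K y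
                   / (gauss_dens (\<sigma>\<^sup>2) 0 (y K) * q y))
           \<partial>density (path_space K) (\<lambda>y. ennreal (q y)))
         \<le> ln (integral\<^sup>L lborel \<gamma>))
    \<and> (\<forall>(\<beta> :: real \<Rightarrow> real) T. T > 0 \<and> (\<forall>t\<in>{0..T}. \<beta> t > 0) \<and> mono_on {0..T} \<beta>
        \<longrightarrow> law_at (path_space K) (markov_dens (gauss_dens (\<sigma>\<^sup>2) 0) (em_trans \<sigma> \<beta> T K) K) K
              \<noteq> density lborel (\<lambda>y. ennreal (gauss_dens (\<sigma>\<^sup>2) (0::'a) y)))"
proof -
  have gauss: "gauss_dens (\<sigma>\<^sup>2) (0::'a) \<in> borel_measurable lborel" "\<And>z. 0 < gauss_dens (\<sigma>\<^sup>2) (0::'a) z"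
    using assms(1) by (auto intro: gauss_dens_pos)
  show ?thesis
    using markov_reference_KL_and_elbo[OF gauss, of \<gamma> K tr q] em_trans_law_ne_gauss[OF assms]
    by blast
qed

end
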